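(* Let $\phi:\mathbb{N}_0\to\mathbb{N}_0$ satisfy $\phi(0)=0$ and $\phi(x)\neq x$ for all $x\in\mathbb{N}$, let $k,n\ge1$, and assume the local function $\phi_n$ has no cycle. Let $J_{n,k}(\phi)=\{x\in D_n:\phi_n^k(x)\in D_n\}$. Then $|J_{n,k}(\phi)|\le\max(n-k,0)$. In particular, $|J_{n,1}(\phi)|=n-|\widetilde{D}_n|$.
   Context: $\mathbb{N}=\{1,2,\dots\}$, $\mathbb{N}_0=\mathbb{N}\cup\{0\}$, $D_n=\{1,\dots,n\}$, $D_{n,0}=D_n\cup\{0\}$. The local function $\phi_n:D_{n,0}\to D_{n,0}$ is $\phi_n(x)=\phi(x)$ if $x\in D_n$ and $\phi(x)\in D_n$, and $\phi_n(x)=0$ otherwise. "$\phi_n$ has no cycle" means there are no $m\ge2$ and $x\in D_n$ with $\phi_n^m(x)=x$. The height of $x\in D_n$ is $h(x)=\min\{k\in\mathbb{N}:\phi_n^k(x)=0\}$, and the orbit of $x$ is $\Omega(x)=\{\phi_n^j(x):0\le j<h(x)\}$. $\widetilde{D}_n$ denotes the set of equivalence classes of $D_n$ under the equivalence relation $x\sim y\iff\Omega(x)\cap\Omega(y)\neq\emptyset$. *)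

theory Defs
  imports Main
begin

text \<open>D_n = {1..n}; the local function phi_n on D_{n,0} = {0..n}.\<close>

definition local_fun :: "(nat \<Rightarrow> nat) \<Rightarrow> nat \<Rightarrow> nat \<Rightarrow> nat" where
  "local_fun phi n x = (if x \<in> {1..n} \<and> phi x \<in> {1..n} then phi x else 0)"

definition no_cycle :: "(nat \<Rightarrow> nat) \<Rightarrow> nat \<Rightarrow> bool" where
  "no_cycle phi n \<longleftrightarrow>
     \<not> (\<exists>m\<ge>2. \<exists>x\<in>{1..n}. (local_fun phi n ^^ m) x = x)"

definition height :: "(nat \<Rightarrow> nat) \<Rightarrow> nat \<Rightarrow> nat \<Rightarrow> nat" where
  "height phi n x = (LEAST k. k \<ge> 1 \<and> (local_fun phi n ^^ k) x = 0)"

definition orbit :: "(nat \<Rightarrow> nat) \<Rightarrow> nat \<Rightarrow> nat \<Rightarrow> nat set" where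
  "orbit phi n x = {(local_fun phi n ^^ j) x | j. j < height phi n x}"

definition orbit_rel :: "(nat \<Rightarrow> nat) \<Rightarrow> nat \<Rightarrow> (nat \<times> nat) set" where
  "orbit_rel phi n = {(x, y). x \<in> {1..n} \<and> y \<in> {1..n} \<and> orbit phi n x \<inter> orbit phi n y \<noteq> {}}"

definition orbit_classes :: "(nat \<Rightarrow> nat) \<Rightarrow> nat \<Rightarrow> nat set set" where
  "orbit_classes phi n = {1..n} // orbit_rel phi n"

definition J_set :: "(nat \<Rightarrow> nat) \<Rightarrow> nat \<Rightarrow> nat \<Rightarrow> nat set" where
  "J_set phi n k = {x \<in> {1..n}. (local_fun phi n ^^ k) x \<in> {1..n}}"

end

theory Submission
  imports Defs
begin

text \<open>Without cycles every point of \<open>D\<^sub>n\<close> falls into \<open>0\<close> within \<open>n\<close> steps (pigeonhole), so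
  its orbit ends in a unique last point \<open>r(x)\<close> with \<open>\<phi>\<^sub>n(r(x)) = 0\<close>. If \<open>J\<^sub>k\<close> is nonempty, taking
  the point \<open>k\<close> steps before the end of some orbit through \<open>J\<^sub>k\<close> shows \<open>J\<^sub>k\<^sub>+\<^sub>1 \<subset> J\<^sub>k\<close>, whence
  \<open>|J\<^sub>k| \<le> n - k\<close>. Two orbits meet iff they have the same last point, so the classes of \<open>D\<^sub>n\<close>
  correspond to the last points, which are exactly the points of \<open>D\<^sub>n - J\<^sub>1\<close>.\<close>

lemma card_quotient_kernel:
  assumes "finite A"
  shows "card (A // {(x, y). x \<in> A \<and> y \<in> A \<and> g x = g y}) = card (g ` A)"
proof -
  have "{(x, y). x \<in> A \<and> y \<in> A \<and> g x = g y} `` {a} = {x \<in> A. g x = g a}" if "a \<in> A" for a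
    using that by auto
  then have "A // {(x, y). x \<in> A \<and> y \<in> A \<and> g x = g y} = (\<lambda>v. {x \<in> A. g x = v}) ` g ` A"
    unfolding quotient_def by (auto simp: image_iff)
  moreover have "inj_on (\<lambda>v. {x \<in> A. g x = v}) (g ` A)"
    by (rule inj_onI) blast
  ultimately show ?thesis by (simp add: card_image)
qed

lemma funpow_diff_apply: "j \<le> i \<Longrightarrow> (f ^^ (i - j)) ((f ^^ j) x) = (f ^^ i) x"
  by (metis funpow_add le_add_diff_inverse2 comp_apply)

lemma local_fun_zero [simp]: "local_fun phi n 0 = 0"
  unfolding local_fun_def by auto

lemma local_fun_le: "local_fun phi n x \<le> n"
  unfolding local_fun_def by auto

lemma funpow_local_fun_zero [simp]: "(local_fun phi n ^^ j) 0 = 0"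
  by (induction j) auto

lemma funpow_local_fun_le: "x \<le> n \<Longrightarrow> (local_fun phi n ^^ j) x \<le> n"
  by (cases j) (auto simp: local_fun_le)

lemma funpow_local_fun_in_D:
  "x \<in> {1..n} \<Longrightarrow> (local_fun phi n ^^ j) x \<noteq> 0 \<Longrightarrow> (local_fun phi n ^^ j) x \<in> {1..n}"
  using funpow_local_fun_le[where x=x and n=n and phi=phi and j=j] by auto

lemma funpow_local_fun_eq_0_mono:
  assumes "(local_fun phi n ^^ i) x = 0" and "i \<le> j"
  shows "(local_fun phi n ^^ j) x = 0"
  using funpow_diff_apply[OF assms(2), of "local_fun phi n" x] assms(1) by simp

lemma funpow_local_fun_n_eq_0:
  assumes nc: "no_cycle phi n" and x: "x \<in> {1..n}"
  shows "(local_fun phi n ^^ n) x = 0"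
proof (rule ccontr)
  let ?F = "local_fun phi n" and ?it = "\<lambda>j. (local_fun phi n ^^ j) x"
  assume nz: "?it n \<noteq> 0"
  have in_D: "?it j \<in> {1..n}" if "j \<le> n" for j
  proof -
    have "?it j \<noteq> 0"
    proof
      assume "?it j = 0"
      then have "?it n = 0" using that by (rule funpow_local_fun_eq_0_mono)
      with nz show False ..
    qed
    then show ?thesis using funpow_local_fun_in_D[OF x] by blast
  qed
  have "\<not> inj_on ?it {0..n}"
  proof (rule pigeonhole)
    have "?it ` {0..n} \<subseteq> {1..n}" using in_D by (simp add: image_subset_iff)
    then have "card (?it ` {0..n}) \<le> card {1..n}" by (rule card_mono[rotated]) simp
    then show "card (?it ` {0..n}) < card {0..n}" by simp
  qed
  then obtain i j where "i \<le> n" "j \<le> n" "i \<noteq> j" "?it i = ?it j"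
    unfolding inj_on_def by auto
  then obtain a b where ab: "a < b" "b \<le> n" "?it a = ?it b"
    by (metis linorder_neqE_nat)
  define y where "y = ?it a"
  have cyc: "(?F ^^ (b - a)) y = y"
    using ab funpow_diff_apply[of a b ?F x] unfolding y_def by simp
  \<comment> \<open>A fixed point is a 2-cycle in the sense of \<open>no_cycle\<close>, hence the doubled exponent.\<close>
  have "(?F ^^ ((b - a) + (b - a))) y = y"
    by (simp add: funpow_add cyc)
  moreover have "y \<in> {1..n}" using in_D ab unfolding y_def by simp
  moreover have "(b - a) + (b - a) \<ge> 2" using ab by simp
  ultimately show False using nc unfolding no_cycle_def by blast
qed

lemma ex_last_nonzero_iterate:
  assumes "no_cycle phi n" and "x \<in> {1..n}"
  obtains i where "(local_fun phi n ^^ i) x \<noteq> 0" "(local_fun phi n ^^ Suc i) x = 0"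
proof -
  let ?P = "\<lambda>m. (local_fun phi n ^^ m) x = 0"
  define m where "m = (LEAST m. ?P m)"
  have Pm: "?P m"
    unfolding m_def using funpow_local_fun_n_eq_0[OF assms] by (rule LeastI)
  have "m \<noteq> 0" using Pm assms(2) by (intro notI) simp
  then obtain i where i: "m = Suc i" using not0_implies_Suc by blast
  then have "\<not> ?P i" using not_less_Least[of i ?P] unfolding m_def by simp
  with Pm i show ?thesis using that by simp
qed

lemma height_eq_Suc:
  assumes "(local_fun phi n ^^ i) x \<noteq> 0" and "(local_fun phi n ^^ Suc i) x = 0"
  shows "height phi n x = Suc i"
  unfolding height_def
proof (rule Least_equality)
  show "1 \<le> Suc i \<and> (local_fun phi n ^^ Suc i) x = 0" using assms(2) by simp
next
  fix k assume k: "1 \<le> k \<and> (local_fun phi n ^^ k) x = 0"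
  show "Suc i \<le> k"
  proof (rule ccontr)
    assume "\<not> Suc i \<le> k"
    then have "(local_fun phi n ^^ i) x = 0"
      using k funpow_local_fun_eq_0_mono[where i=k and j=i] by simp
    with assms(1) show False ..
  qed
qed

lemma J_set_Suc_subset: "J_set phi n (Suc j) \<subseteq> J_set phi n j"
proof
  fix x assume x: "x \<in> J_set phi n (Suc j)"
  have "(local_fun phi n ^^ j) x \<noteq> 0"
  proof
    assume "(local_fun phi n ^^ j) x = 0"
    then have "(local_fun phi n ^^ Suc j) x = 0" by simp
    with x show False unfolding J_set_def by simp
  qed
  with x show "x \<in> J_set phi n j"
    unfolding J_set_def using funpow_local_fun_in_D by blast
qed

lemma J_set_Suc_psubset:
  assumes nc: "no_cycle phi n" and "J_set phi n j \<noteq> {}"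
  shows "J_set phi n (Suc j) \<subset> J_set phi n j"
proof -
  let ?F = "local_fun phi n"
  obtain x where x: "x \<in> {1..n}" and xj: "(?F ^^ j) x \<in> {1..n}"
    using assms(2) unfolding J_set_def by blast
  obtain i where i: "(?F ^^ i) x \<noteq> 0" "(?F ^^ Suc i) x = 0"
    using ex_last_nonzero_iterate[OF nc x] by blast
  have "j \<le> i"
  proof (rule ccontr)
    assume "\<not> j \<le> i"
    then have "(?F ^^ j) x = 0"
      using i(2) funpow_local_fun_eq_0_mono[where i="Suc i" and j=j] by simp
    with xj show False by simp
  qed
  define y where "y = (?F ^^ (i - j)) x"
  have yj: "(?F ^^ j) y = (?F ^^ i) x" and "(?F ^^ Suc j) y = (?F ^^ Suc i) x"
    unfolding y_def using \<open>j \<le> i\<close> funpow_diff_apply[of "i - j" i ?F x]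
    by (simp_all add: funpow_swap1)
  moreover have "y \<noteq> 0"
    using i(1) yj by (metis funpow_local_fun_zero)
  ultimately have "y \<in> J_set phi n j - J_set phi n (Suc j)"
    unfolding J_set_def y_def using x i funpow_local_fun_in_D by simp
  with J_set_Suc_subset show ?thesis by blast
qed

lemma card_J_set_le:
  assumes "no_cycle phi n"
  shows "card (J_set phi n k) \<le> n - k"
proof (induction k)
  case 0
  have "J_set phi n 0 = {1..n}" unfolding J_set_def by auto
  then show ?case by simp
next
  case (Suc k)
  show ?case
  proof (cases "J_set phi n k = {}")
    case True
    then show ?thesis using J_set_Suc_subset[where phi=phi and n=n and j=k] by auto
  next
    case False
    have "finite (J_set phi n k)" unfolding J_set_def by auto
    then have "card (J_set phi n (Suc k)) < card (J_set phi n k)"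
      using psubset_card_mono J_set_Suc_psubset[OF assms False] by blast
    then show ?thesis using Suc.IH by simp
  qed
qed

definition orbit_end :: "(nat \<Rightarrow> nat) \<Rightarrow> nat \<Rightarrow> nat \<Rightarrow> nat" where
  "orbit_end phi n x = (local_fun phi n ^^ (height phi n x - 1)) x"

lemma orbit_end_in_orbit:
  assumes nc: "no_cycle phi n" and x: "x \<in> {1..n}"
  shows "orbit_end phi n x \<in> orbit phi n x" and "orbit_end phi n x \<in> {1..n}"
    and "local_fun phi n (orbit_end phi n x) = 0"
proof -
  obtain i where i: "(local_fun phi n ^^ i) x \<noteq> 0" "(local_fun phi n ^^ Suc i) x = 0"
    using ex_last_nonzero_iterate[OF nc x] by blast
  note h = height_eq_Suc[OF i]
  show "orbit_end phi n x \<in> orbit phi n x" unfolding orbit_def orbit_end_def h by auto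
  show "orbit_end phi n x \<in> {1..n}" "local_fun phi n (orbit_end phi n x) = 0"
    using i funpow_local_fun_in_D[OF x] unfolding orbit_end_def h by simp_all
qed

lemma orbit_end_of_orbit:
  assumes nc: "no_cycle phi n" and x: "x \<in> {1..n}" and z: "z \<in> orbit phi n x"
  shows "orbit_end phi n z = orbit_end phi n x"
proof -
  let ?F = "local_fun phi n"
  obtain i where i: "(?F ^^ i) x \<noteq> 0" "(?F ^^ Suc i) x = 0"
    using ex_last_nonzero_iterate[OF nc x] by blast
  note h = height_eq_Suc[OF i]
  obtain j where j: "z = (?F ^^ j) x" "j \<le> i" using z unfolding orbit_def h by auto
  have "(?F ^^ (i - j)) z = (?F ^^ i) x" and "(?F ^^ Suc (i - j)) z = (?F ^^ Suc i) x"
    using j funpow_diff_apply[of j i ?F x] by simp_all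
  then have "height phi n z = Suc (i - j)" and "(?F ^^ (i - j)) z = (?F ^^ i) x"
    using height_eq_Suc i by simp_all
  then show ?thesis unfolding orbit_end_def h by simp
qed

lemma orbit_rel_eq_kernel_orbit_end:
  assumes nc: "no_cycle phi n"
  shows "orbit_rel phi n =
    {(x, y). x \<in> {1..n} \<and> y \<in> {1..n} \<and> orbit_end phi n x = orbit_end phi n y}"
proof -
  have "orbit phi n x \<inter> orbit phi n y \<noteq> {} \<longleftrightarrow> orbit_end phi n x = orbit_end phi n y"
    if "x \<in> {1..n}" "y \<in> {1..n}" for x y
    using orbit_end_of_orbit[OF nc] orbit_end_in_orbit(1)[OF nc] that by (metis disjoint_iff)
  then show ?thesis unfolding orbit_rel_def by blast
qed

lemma orbit_end_image:
  assumes nc: "no_cycle phi n"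
  shows "orbit_end phi n ` {1..n} = {1..n} - J_set phi n 1"
proof
  show "orbit_end phi n ` {1..n} \<subseteq> {1..n} - J_set phi n 1"
    using orbit_end_in_orbit(2,3)[OF nc] unfolding J_set_def by auto
next
  show "{1..n} - J_set phi n 1 \<subseteq> orbit_end phi n ` {1..n}"
  proof
    fix r assume "r \<in> {1..n} - J_set phi n 1"
    then have r: "r \<in> {1..n}" "local_fun phi n r = 0"
      unfolding J_set_def using local_fun_le[where phi=phi and n=n and x=r] by auto
    then have "height phi n r = 1" using height_eq_Suc[where i=0 and x=r] by simp
    then have "orbit_end phi n r = r" unfolding orbit_end_def by simp
    then show "r \<in> orbit_end phi n ` {1..n}" using r by force
  qed
qed

lemma card_orbit_classes:
  assumes "no_cycle phi n"
  shows "card (orbit_classes phi n) = n - card (J_set phi n 1)"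
proof -
  have J: "J_set phi n 1 \<subseteq> {1..n}" unfolding J_set_def by auto
  have "card (orbit_classes phi n) = card ({1..n} - J_set phi n 1)"
    unfolding orbit_classes_def orbit_rel_eq_kernel_orbit_end[OF assms]
      orbit_end_image[OF assms, symmetric]
    by (rule card_quotient_kernel) simp
  also have "\<dots> = n - card (J_set phi n 1)"
    using card_Diff_subset[OF finite_subset[OF J] J] by simp
  finally show ?thesis .
qed

theorem proposition2p4:
  fixes phi :: "nat \<Rightarrow> nat" and n k :: nat
  assumes "phi 0 = 0"
    and "\<And>x. x \<ge> 1 \<Longrightarrow> phi x \<noteq> x"
    and "k \<ge> 1" and "n \<ge> 1"
    and "no_cycle phi n"
  shows "card (J_set phi n k) \<le> n - k \<and>
         card (J_set phi n 1) = n - card (orbit_classes phi n)"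
proof
  show "card (J_set phi n k) \<le> n - k"
    using card_J_set_le[OF assms(5)] .
  have "card (J_set phi n 1) \<le> n"
    using card_J_set_le[OF assms(5), of 1] by simp
  then show "card (J_set phi n 1) = n - card (orbit_classes phi n)"
    using card_orbit_classes[OF assms(5)] by simp
qed

end
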